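(* Let $(\Omega,F,\mathbf P)$ be a non-trivial probability space and let $\psi\colon[1,\infty)\to(0,\infty)$ be a finite, continuous, strictly increasing function with $\psi(1)=\inf_{p\ge1}\psi(p)=1$. Let $S\subset[1,\infty)$ be a Borel set with $1\in S$. For $p\ge1$ put $p^+[S](p)=\inf\{t\in S:\ t\ge p\}$ and $$Z[\psi,S]=\sup_{p\ge1}\frac{\psi(p^+[S](p))}{\psi(p)}.$$ Suppose $Z[\psi,S]<\infty$. Then for every measurable $f\colon\Omega\to\mathbb R$, $$\|f\|G^{(S)}\psi\le\|f\|G\psi\le Z[\psi,S]\,\|f\|G^{(S)}\psi,$$ where $$\|f\|G\psi=\sup_{p\ge1}\frac{|f|_p}{\psi(p)},\qquad \|f\|G^{(S)}\psi=\sup_{p\in S}\frac{|f|_p}{\psi(p)}.$$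
   Context: For a random variable $f$ on $(\Omega,F,\mathbf P)$, $|f|_p=\left(\mathbf E|f|^p\right)^{1/p}$ for $1\le p<\infty$ (possibly $+\infty$). The quantity $\|f\|G\psi$ is the Grand Lebesgue Space norm with generating function $\psi$, and $\|f\|G^{(S)}\psi$ is the restricted Grand Lebesgue Space norm. *)

theory Defs
  imports "HOL-Probability.Probability"
begin

definition lp_norm :: "'a measure \<Rightarrow> ('a \<Rightarrow> real) \<Rightarrow> real \<Rightarrow> ennreal" where
  "lp_norm M f p =
     (let I = (\<integral>\<^sup>+ x. ennreal (\<bar>f x\<bar> powr p) \<partial>M)
      in if I = \<infinity> then \<infinity> else ennreal (enn2real I powr (1 / p)))"

definition GLS_norm :: "'a measure \<Rightarrow> (real \<Rightarrow> real) \<Rightarrow> ('a \<Rightarrow> real) \<Rightarrow> ennreal" where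
  "GLS_norm M psi f = (SUP p\<in>{1..}. lp_norm M f p / ennreal (psi p))"

definition GLS_norm_restr :: "'a measure \<Rightarrow> (real \<Rightarrow> real) \<Rightarrow> real set \<Rightarrow> ('a \<Rightarrow> real) \<Rightarrow> ennreal" where
  "GLS_norm_restr M psi S f = (SUP p\<in>S. lp_norm M f p / ennreal (psi p))"

text \<open>p^+[S](p) = inf {t in S. t >= p}.  When this set is empty the infimum is +infinity
  and we take psi(p^+)/psi(p) = +infinity.\<close>
definition p_plus :: "real set \<Rightarrow> real \<Rightarrow> real" where
  "p_plus S p = Inf {t \<in> S. t \<ge> p}"

definition Z_const :: "(real \<Rightarrow> real) \<Rightarrow> real set \<Rightarrow> ennreal" where
  "Z_const psi S = (SUP p\<in>{1..}.
      (if \<exists>t\<in>S. t \<ge> p then ennreal (psi (p_plus S p) / psi p) else \<infinity>))"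

end

theory Submission
  imports Defs
begin

text \<open>The left inequality holds because S \<subseteq> [1, \<infinity>). For the right one fix p \<ge> 1 and put
  q = p_plus S p; finiteness of Z forces S to meet [p, \<infinity>). For t \<in> S with t \<ge> p, Lyapunov's
  inequality |f|_p \<le> |f|_t (Jensen's inequality for x \<mapsto> x powr (t / p)) and the definition of
  the restricted norm R give |f|_p \<le> R \<psi>(t). Letting t decrease to q along S, continuity of \<psi>
  yields |f|_p \<le> R \<psi>(q) = R (\<psi>(q) / \<psi>(p)) \<psi>(p) \<le> R Z \<psi>(p).\<close>

lemma powr_above_tangent:
  fixes r c y :: real
  assumes r: "1 \<le> r" and c: "0 < c" and y: "0 \<le> y"
  shows "c powr r + r * c powr (r - 1) * (y - c) \<le> y powr r"
proof (cases "y = 0")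
  case True
  have "r * c powr (r - 1) * (0 - c) = - r * c powr r"
    using c by (simp add: powr_diff)
  moreover have "c powr r \<le> r * c powr r"
    using r c by (simp add: mult_le_cancel_right1)
  ultimately have "c powr r + r * c powr (r - 1) * (0 - c) \<le> 0"
    by linarith
  then show ?thesis
    using True by simp
next
  case False
  have "r * c powr (r - 1) * (y - c) \<le> y powr r - c powr r"
  proof (rule convex_on_imp_above_tangent[where A = "{0<..}"])
    show "convex_on {0<..} (\<lambda>x. x powr r)"
      using powr_convex[OF r] .
    show "((\<lambda>x. x powr r) has_field_derivative r * c powr (r - 1)) (at c within {0<..})"
      using c by (auto intro!: derivative_eq_intros)
  qed (use c y False in \<open>auto simp: interior_open\<close>)
  then show ?thesis
    by simp
qed

lemma (in prob_space) powr_expectation_le: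
  fixes g :: "'a \<Rightarrow> real"
  assumes r: "1 \<le> r" and g: "integrable M g" "integrable M (\<lambda>x. g x powr r)"
    and g_nonneg: "\<And>x. 0 \<le> g x"
  shows "expectation g powr r \<le> expectation (\<lambda>x. g x powr r)"
proof -
  define c where "c = expectation g"
  have "0 \<le> c"
    unfolding c_def using g_nonneg by simp
  show ?thesis
  proof (cases "c = 0")
    case True
    then show ?thesis
      using g_nonneg by (simp add: c_def)
  next
    case False
    with \<open>0 \<le> c\<close> have "0 < c"
      by simp
    have "c powr r = expectation (\<lambda>x. c powr r + r * c powr (r - 1) * (g x - c))"
      using g by (simp add: c_def prob_space)
    also have "\<dots> \<le> expectation (\<lambda>x. g x powr r)"
      using powr_above_tangent[OF r \<open>0 < c\<close> g_nonneg] g by (intro integral_mono) auto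
    finally show ?thesis
      by (simp add: c_def)
  qed
qed

lemma lp_norm_eq_integral:
  assumes "integrable M (\<lambda>x. \<bar>f x\<bar> powr p)"
  shows "lp_norm M f p = ennreal ((\<integral>x. \<bar>f x\<bar> powr p \<partial>M) powr (1 / p))"
proof -
  have "(\<integral>\<^sup>+ x. ennreal (\<bar>f x\<bar> powr p) \<partial>M) = ennreal (\<integral>x. \<bar>f x\<bar> powr p \<partial>M)"
    using assms by (intro nn_integral_eq_integral) auto
  then show ?thesis
    by (simp add: lp_norm_def)
qed

lemma lp_norm_eq_top_if_not_integrable:
  assumes [measurable]: "f \<in> borel_measurable M"
    and not_int: "\<not> integrable M (\<lambda>x. \<bar>f x\<bar> powr p)"
  shows "lp_norm M f p = \<infinity>"
proof (rule ccontr)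
  assume "lp_norm M f p \<noteq> \<infinity>"
  then have "(\<integral>\<^sup>+ x. ennreal (norm (\<bar>f x\<bar> powr p)) \<partial>M) < \<infinity>"
    by (auto simp: lp_norm_def Let_def top.not_eq_extremum split: if_splits)
  then have "integrable M (\<lambda>x. \<bar>f x\<bar> powr p)"
    by (intro integrableI_bounded) auto
  with not_int show False ..
qed

lemma (in finite_measure) integrable_abs_powr_mono:
  fixes f :: "'a \<Rightarrow> real"
  assumes [measurable]: "f \<in> borel_measurable M"
    and p: "0 \<le> p" "p \<le> t" and int_t: "integrable M (\<lambda>x. \<bar>f x\<bar> powr t)"
  shows "integrable M (\<lambda>x. \<bar>f x\<bar> powr p)"
proof (rule Bochner_Integration.integrable_bound)
  show "integrable M (\<lambda>x. 1 + \<bar>f x\<bar> powr t)"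
    using int_t by simp
  have "\<bar>f x\<bar> powr p \<le> 1 + \<bar>f x\<bar> powr t" for x
  proof (cases "\<bar>f x\<bar> \<le> 1")
    case True
    then have "\<bar>f x\<bar> powr p \<le> 1 powr p"
      using p by (intro powr_mono2) auto
    then show ?thesis
      by (simp add: add_increasing2)
  next
    case False
    then have "\<bar>f x\<bar> powr p \<le> \<bar>f x\<bar> powr t"
      using p by (intro powr_mono) auto
    then show ?thesis
      by simp
  qed
  then show "AE x in M. norm (\<bar>f x\<bar> powr p) \<le> norm (1 + \<bar>f x\<bar> powr t)"
    by simp
qed measurable

lemma (in prob_space) lp_norm_mono:
  assumes f: "f \<in> borel_measurable M" and p: "0 < p" "p \<le> t"
  shows "lp_norm M f p \<le> lp_norm M f t"
proof (cases "integrable M (\<lambda>x. \<bar>f x\<bar> powr t)")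
  case False
  with f have "lp_norm M f t = \<infinity>"
    by (rule lp_norm_eq_top_if_not_integrable)
  then show ?thesis
    by simp
next
  case True
  have int_p: "integrable M (\<lambda>x. \<bar>f x\<bar> powr p)"
    using p by (intro integrable_abs_powr_mono[OF f _ _ True]) auto
  have "expectation (\<lambda>x. \<bar>f x\<bar> powr p) powr (t / p)
      \<le> expectation (\<lambda>x. (\<bar>f x\<bar> powr p) powr (t / p))"
    using p by (intro powr_expectation_le int_p) (simp_all add: powr_powr True)
  also have "\<dots> = expectation (\<lambda>x. \<bar>f x\<bar> powr t)"
    using p by (simp add: powr_powr)
  finally have Jensen: "expectation (\<lambda>x. \<bar>f x\<bar> powr p) powr (t / p)
      \<le> expectation (\<lambda>x. \<bar>f x\<bar> powr t)" .
  have "expectation (\<lambda>x. \<bar>f x\<bar> powr p) powr (1 / p)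
      = (expectation (\<lambda>x. \<bar>f x\<bar> powr p) powr (t / p)) powr (1 / t)"
    using p by (simp add: powr_powr)
  also have "\<dots> \<le> expectation (\<lambda>x. \<bar>f x\<bar> powr t) powr (1 / t)"
    using Jensen p by (intro powr_mono2) auto
  finally show ?thesis
    by (simp add: lp_norm_eq_integral[OF int_p] lp_norm_eq_integral[OF True])
qed

lemma GLS_norm_restr_le_GLS_norm:
  assumes "S \<subseteq> {1..}"
  shows "GLS_norm_restr M psi S f \<le> GLS_norm M psi f"
  unfolding GLS_norm_restr_def GLS_norm_def using assms by (rule SUP_subset_mono) simp

lemma lp_norm_le_GLS_norm_restr:
  assumes "t \<in> S" and "0 < psi t"
  shows "lp_norm M f t \<le> GLS_norm_restr M psi S f * ennreal (psi t)"
proof -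
  have "lp_norm M f t / ennreal (psi t) \<le> GLS_norm_restr M psi S f"
    unfolding GLS_norm_restr_def using assms(1) by (rule SUP_upper)
  then have "lp_norm M f t / ennreal (psi t) * ennreal (psi t)
      \<le> GLS_norm_restr M psi S f * ennreal (psi t)"
    by (rule mult_right_mono) simp
  then show ?thesis
    using assms(2) by (simp add: ennreal_divide_times ennreal_times_divide ennreal_mult_divide_eq)
qed

lemma ex_ge_if_Z_const_finite:
  assumes "Z_const psi S < \<infinity>" and "1 \<le> p"
  shows "\<exists>t\<in>S. p \<le> t"
proof (rule ccontr)
  assume "\<not> (\<exists>t\<in>S. p \<le> t)"
  then have "\<infinity> \<le> Z_const psi S"
    unfolding Z_const_def using assms(2) by (intro SUP_upper2[of p]) auto
  with assms(1) show False
    by simp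
qed

lemma p_plus_ratio_le_Z_const:
  assumes "1 \<le> p" and "\<exists>t\<in>S. p \<le> t"
  shows "ennreal (psi (p_plus S p) / psi p) \<le> Z_const psi S"
  unfolding Z_const_def using assms by (intro SUP_upper2[of p]) auto

lemma le_mult_at_Inf_if_continuous:
  fixes g :: "real \<Rightarrow> real" and T :: "real set"
  assumes "T \<noteq> {}" "bdd_below T"
    and g: "continuous_on (closure T) g" "\<And>t. t \<in> closure T \<Longrightarrow> 0 < g t"
    and le: "\<And>t. t \<in> T \<Longrightarrow> a \<le> R * ennreal (g t)"
  shows "a \<le> R * ennreal (g (Inf T))"
proof -
  have Inf_closure: "Inf T \<in> closure T"
    using assms(1,2) by (rule closure_contains_Inf)
  show ?thesis
  proof (cases R)
    case (real r)
    have le_real: "a \<le> ennreal (r * g t)" if "t \<in> T" for t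
      using le[OF that] real g(2)[OF closure_subset[THEN subsetD, OF that]]
      by (simp add: ennreal_mult'')
    obtain t where "t \<in> T"
      using assms(1) by blast
    have "a \<noteq> top"
      using le_real[OF \<open>t \<in> T\<close>] by (rule neq_top_trans[OF ennreal_neq_top])
    then obtain b where b: "a = ennreal b" "0 \<le> b"
      by (cases a rule: ennreal_cases) auto
    have b_le: "b \<le> r * g t" if "t \<in> T" for t
      using le_real[OF that] b real g(2)[OF closure_subset[THEN subsetD, OF that]] by simp
    have "b \<le> r * g (Inf T)"
      by (rule continuous_ge_on_closure[OF continuous_on_mult[OF continuous_on_const g(1)]
            Inf_closure b_le])
    then show ?thesis
      using b real g(2)[OF Inf_closure] by (simp add: ennreal_mult''[symmetric])
  next
    case top
    then show ?thesis
      using g(2)[OF Inf_closure] by (simp add: ennreal_mult_top)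
  qed
qed

lemma (in prob_space) lp_norm_le_GLS_norm_restr_p_plus:
  assumes f: "f \<in> borel_measurable M"
    and psi: "continuous_on {1..} psi" "\<forall>p\<ge>1. 0 < psi p"
    and S: "S \<subseteq> {1..}" and p: "1 \<le> p" "\<exists>t\<in>S. p \<le> t"
  shows "lp_norm M f p \<le> GLS_norm_restr M psi S f * ennreal (psi (p_plus S p))"
proof -
  define T where "T = {t \<in> S. p \<le> t}"
  have closure_T: "closure T \<subseteq> {p..}"
    unfolding T_def by (intro closure_minimal) auto
  have "lp_norm M f p \<le> GLS_norm_restr M psi S f * ennreal (psi (Inf T))"
  proof (rule le_mult_at_Inf_if_continuous)
    show "T \<noteq> {}" "bdd_below T"
      using p(2) unfolding T_def by (auto intro: bdd_belowI[of _ p])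
    have "closure T \<subseteq> {1..}"
      using closure_T p(1) by auto
    then show "continuous_on (closure T) psi" "\<And>t. t \<in> closure T \<Longrightarrow> 0 < psi t"
      using psi by (auto intro: continuous_on_subset)
    show "lp_norm M f p \<le> GLS_norm_restr M psi S f * ennreal (psi t)" if "t \<in> T" for t
      using that S p(1) psi(2) unfolding T_def
      by (auto intro!: order.trans[OF lp_norm_mono[OF f] lp_norm_le_GLS_norm_restr])
  qed
  then show ?thesis
    by (simp add: p_plus_def T_def)
qed

theorem theorem1p1:
  fixes M :: "'a measure" and psi :: "real \<Rightarrow> real" and S :: "real set"
    and f :: "'a \<Rightarrow> real"
  assumes "prob_space M"
    and "\<exists>A\<in>sets M. 0 < measure M A \<and> measure M A < 1"
    and "continuous_on {1..} psi"
    and "strict_mono_on {1..} psi"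
    and "\<forall>p\<ge>1. psi p > 0"
    and "psi 1 = 1"
    and "(INF p\<in>{1..}. psi p) = 1"
    and "S \<in> sets borel" and "S \<subseteq> {1..}" and "1 \<in> S"
    and "Z_const psi S < \<infinity>"
    and "f \<in> borel_measurable M"
  shows "GLS_norm_restr M psi S f \<le> GLS_norm M psi f
       \<and> GLS_norm M psi f \<le> Z_const psi S * GLS_norm_restr M psi S f"
proof
  show "GLS_norm_restr M psi S f \<le> GLS_norm M psi f"
    using assms(9) by (rule GLS_norm_restr_le_GLS_norm)
  interpret prob_space M by fact
  define R where "R = GLS_norm_restr M psi S f"
  show "GLS_norm M psi f \<le> Z_const psi S * R"
    unfolding GLS_norm_def
  proof (rule SUP_least)
    fix p :: real
    assume "p \<in> {1..}"
    then have p: "1 \<le> p" "\<exists>t\<in>S. p \<le> t"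
      using ex_ge_if_Z_const_finite[OF assms(11)] by auto
    have "0 < psi p"
      using assms(5) p(1) by simp
    have "lp_norm M f p \<le> R * ennreal (psi (p_plus S p))"
      unfolding R_def using assms(12,3,5,9) p by (rule lp_norm_le_GLS_norm_restr_p_plus)
    also have "\<dots> = R * ennreal (psi (p_plus S p) / psi p) * ennreal (psi p)"
      using \<open>0 < psi p\<close> by (simp add: mult.assoc ennreal_mult''[symmetric])
    also have "\<dots> \<le> R * Z_const psi S * ennreal (psi p)"
      using p by (intro mult_right_mono mult_left_mono p_plus_ratio_le_Z_const) auto
    finally show "lp_norm M f p / ennreal (psi p) \<le> Z_const psi S * R"
      using \<open>0 < psi p\<close> by (intro divide_le_posI_ennreal) (auto simp: mult.commute)
  qed
qed

end
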